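(* Let $h=(I,E)$ be a hypergraph with $|I|=d$, and let $\chi_d(h)$ be the polynomial which agrees, for $m\in\mathbb{Z}_{>0}$, with the number of proper colorings of $h$ with $m$ colors. Then for every $m\in\mathbb{Z}_{>0}$, $$(-1)^d\chi_d(h)(-m)=\#\{(\varsigma,c):\ \varsigma\text{ an acyclic heading of }h,\ c:I\to[m]\text{ a coloring compatible with }\varsigma\}.$$ In particular, the number of acyclic headings of $h$ equals $(-1)^d\chi_d(h)(-1)$.
   Context: A hypergraph $h=(I,E)$ consists of a finite set $I$ of nodes and a finite multiset $E$ of nonempty subsets of $I$ (hyperedges). A coloring with $m$ colors is any map $c:I\to[m]=\{1,\dots,m\}$ (not necessarily proper); it is proper if every hyperedge $e$ contains exactly one node $i$ with $c(i)=\max_{j\in e}c(j)$. A heading is a map $\varsigma:E\to I$ with $\varsigma(e)\in e$ for every $e$. An oriented cycle in $\varsigma$ is a sequence of hyperedges $e_1,\dots,e_\ell$ with $\varsigma(e_j)\in e_{j+1}\setminus\{\varsigma(e_{j+1})\}$ for all $j$, indices modulo $\ell$; $\varsigma$ is acyclic if it has no oriented cycle. A coloring $c$ and a heading $\varsigma$ are compatible if $c(\varsigma(e))=\max_{j\in e}c(j)$ for every $e\in E$. *)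

theory Defs
  imports Main "HOL-Library.FuncSet" "HOL-Computational_Algebra.Polynomial"
begin

text \<open>A hypergraph is given by a finite node set I, a finite index set Ed of
  hyperedge occurrences (so that E is a multiset) and a map edge assigning to each
  index its hyperedge, a nonempty subset of I.\<close>

definition hypergraph :: "'a set \<Rightarrow> 'e set \<Rightarrow> ('e \<Rightarrow> 'a set) \<Rightarrow> bool" where
  "hypergraph I Ed edge \<longleftrightarrow> finite I \<and> finite Ed \<and>
     (\<forall>k\<in>Ed. edge k \<noteq> {} \<and> edge k \<subseteq> I)"

definition colorings :: "'a set \<Rightarrow> nat \<Rightarrow> ('a \<Rightarrow> nat) set" where
  "colorings I m = I \<rightarrow>\<^sub>E {1..m}"

definition proper :: "'e set \<Rightarrow> ('e \<Rightarrow> 'a set) \<Rightarrow> ('a \<Rightarrow> nat) \<Rightarrow> bool" where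
  "proper Ed edge c \<longleftrightarrow> (\<forall>k\<in>Ed. \<exists>!i. i \<in> edge k \<and> c i = Max (c ` edge k))"

definition proper_colorings :: "'a set \<Rightarrow> 'e set \<Rightarrow> ('e \<Rightarrow> 'a set) \<Rightarrow> nat \<Rightarrow> ('a \<Rightarrow> nat) set" where
  "proper_colorings I Ed edge m = {c \<in> colorings I m. proper Ed edge c}"

definition headings :: "'e set \<Rightarrow> ('e \<Rightarrow> 'a set) \<Rightarrow> ('e \<Rightarrow> 'a) set" where
  "headings Ed edge = Pi\<^sub>E Ed edge"

definition oriented_cycle :: "'e set \<Rightarrow> ('e \<Rightarrow> 'a set) \<Rightarrow> ('e \<Rightarrow> 'a) \<Rightarrow> nat \<Rightarrow> (nat \<Rightarrow> 'e) \<Rightarrow> bool" where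
  "oriented_cycle Ed edge s l f \<longleftrightarrow> l \<ge> 1 \<and> (\<forall>j<l. f j \<in> Ed) \<and>
     (\<forall>j<l. s (f j) \<in> edge (f (Suc j mod l)) - {s (f (Suc j mod l))})"

definition acyclic_heading :: "'e set \<Rightarrow> ('e \<Rightarrow> 'a set) \<Rightarrow> ('e \<Rightarrow> 'a) \<Rightarrow> bool" where
  "acyclic_heading Ed edge s \<longleftrightarrow> s \<in> headings Ed edge \<and> \<not> (\<exists>l f. oriented_cycle Ed edge s l f)"

definition acyclic_headings :: "'e set \<Rightarrow> ('e \<Rightarrow> 'a set) \<Rightarrow> ('e \<Rightarrow> 'a) set" where
  "acyclic_headings Ed edge = {s. acyclic_heading Ed edge s}"

definition compatible :: "'e set \<Rightarrow> ('e \<Rightarrow> 'a set) \<Rightarrow> ('a \<Rightarrow> nat) \<Rightarrow> ('e \<Rightarrow> 'a) \<Rightarrow> bool" where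
  "compatible Ed edge c s \<longleftrightarrow> (\<forall>k\<in>Ed. c (s k) = Max (c ` edge k))"

definition compatible_pairs :: "'a set \<Rightarrow> 'e set \<Rightarrow> ('e \<Rightarrow> 'a set) \<Rightarrow> nat \<Rightarrow> (('e \<Rightarrow> 'a) \<times> ('a \<Rightarrow> nat)) set" where
  "compatible_pairs I Ed edge m =
     {(s, c). s \<in> acyclic_headings Ed edge \<and> c \<in> colorings I m \<and> compatible Ed edge c s}"

end

theory Submission
  imports Defs
begin

text \<open>
  Write f(I, m) for the number of proper colorings and g(I, m) for the number of compatible
  pairs of an acyclic heading and a coloring with m colors. Splitting off the set S of nodes
  of the top color m + 1 gives f(I, m + 1) as the sum of f(I - S, m) over the strongly
  independent sets S (no hyperedge contains two nodes of S), so f(I, -) is a polynomial by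
  induction on |I|. Dually, g(I, m) is the sum of (-1)^|S| g(I - S, m + 1): painting S in the
  top color and heading every hyperedge that meets S at its node in S turns a pair on I - S
  into a pair (\<sigma>, c) on I with m + 1 colors together with a set S of top-colored sinks of
  \<sigma>; the alternating sum over S leaves exactly the pairs without such a sink, and by
  acyclicity these are the pairs using only m colors. The two recurrences then give
  (-1)^|I| f(I, -m) = g(I, m) by induction on |I| and on m.
\<close>

section \<open>Polynomials with prescribed differences\<close>

lemma poly_antidifference:
  fixes P :: "'a::field_char_0 poly"
  shows "\<exists>R. \<forall>x. poly R (x + 1) - poly R x = poly P x"
proof (induction "degree P" arbitrary: P rule: less_induct)
  case less
  show ?case
  proof (cases "degree P = 0")
    case True
    then obtain c where "P = [:c:]" by (metis degree_eq_zeroE)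
    then show ?thesis by (intro exI[of _ "[:0, c:]"]) (simp add: algebra_simps)
  next
    case False
    define n where "n = degree P"
    define a where "a = lead_coeff P / of_nat (Suc n)"
    define D where "D = (\<Sum>k\<le>n. monom (a * of_nat (Suc n choose k)) k)"
    \<comment> \<open>subtracting the difference D of a x^(n+1) cancels the leading term of P\<close>
    have diff_monom: "poly (monom a (Suc n)) (x + 1) - poly (monom a (Suc n)) x = poly D x" for x
    proof -
      have "(x + 1) ^ Suc n = (\<Sum>k\<le>Suc n. of_nat (Suc n choose k) * x ^ k)"
        using binomial_ring[of x 1 "Suc n"] by simp
      then have "(x + 1) ^ Suc n - x ^ Suc n = (\<Sum>k\<le>n. of_nat (Suc n choose k) * x ^ k)"
        by simp
      then show ?thesis
        by (simp add: D_def poly_monom poly_sum sum_distrib_left mult.assoc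
            flip: right_diff_distrib)
    qed
    have "coeff D n = lead_coeff P"
      by (simp add: D_def coeff_sum coeff_monom a_def n_def del: of_nat_Suc)
    moreover have "degree D \<le> n"
      unfolding D_def by (rule degree_sum_le) (auto intro: order.trans[OF degree_monom_le])
    ultimately have "degree (P - D) < degree P"
      using False by (intro degree_lessI) (auto simp: n_def le_less coeff_eq_0)
    then obtain R where "\<forall>x. poly R (x + 1) - poly R x = poly (P - D) x"
      using less by blast
    then show ?thesis
      using diff_monom by (intro exI[of _ "R + monom a (Suc n)"]) (auto simp: algebra_simps)
  qed
qed

lemma poly_interpolating_differences:
  fixes \<phi> :: "nat \<Rightarrow> 'a::field_char_0"
  assumes "\<And>m. \<phi> (Suc m) - \<phi> m = poly D (of_nat m)"
  shows "\<exists>P. (\<forall>x. poly P (x + 1) - poly P x = poly D x) \<and> (\<forall>m. poly P (of_nat m) = \<phi> m)"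
proof -
  obtain R where R: "\<forall>x. poly R (x + 1) - poly R x = poly D x"
    using poly_antidifference by blast
  define P where "P = R + [:\<phi> 0 - poly R 0:]"
  have "poly P (of_nat m) = \<phi> m" for m
  proof (induction m)
    case (Suc m)
    then show ?case using R[rule_format, of "of_nat m"] assms[of m] by (simp add: P_def algebra_simps)
  qed (simp add: P_def)
  moreover have "poly P (x + 1) - poly P x = poly D x" for x
    using R by (simp add: P_def)
  ultimately show ?thesis by blast
qed

lemma poly_eqI_of_nat_pos:
  fixes P Q :: "'a::{idom, ring_char_0} poly"
  assumes "\<And>m. m > 0 \<Longrightarrow> poly P (of_nat m) = poly Q (of_nat m)"
  shows "P = Q"
proof (rule ccontr)
  assume "P \<noteq> Q"
  then have "finite {x. poly (P - Q) x = 0}" by (intro poly_roots_finite) simp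
  moreover have "of_nat ` {0<..} \<subseteq> {x. poly (P - Q) x = 0}" using assms by auto
  ultimately have "finite (of_nat ` {0<..} :: 'a set)" by (rule finite_subset[rotated])
  then show False by (simp add: finite_image_iff infinite_Ioi)
qed

lemma poly_neg_of_nat_by_recurrence:
  fixes P D :: "'a::comm_ring_1 poly"
  assumes "\<And>x. poly P (x + 1) - poly P x = poly D x"
    and "\<And>m. g m = g (Suc m) + \<epsilon> * poly D (- of_nat (Suc m))"
    and "\<epsilon> * poly P 0 = g 0"
  shows "\<epsilon> * poly P (- of_nat m) = g m"
proof (induction m)
  case (Suc m)
  have "poly P (- of_nat m) = poly P (- of_nat (Suc m)) + poly D (- of_nat (Suc m))"
    using assms(1)[of "- of_nat (Suc m)"] by (simp add: algebra_simps)
  then show ?case using Suc assms(2)[of m] by (simp add: algebra_simps)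
qed (use assms(3) in simp)

definition induced_edges :: "'e set \<Rightarrow> ('e \<Rightarrow> 'a set) \<Rightarrow> 'a set \<Rightarrow> 'e set" where
  "induced_edges Ed edge U = {k \<in> Ed. edge k \<subseteq> U}"

definition strongly_independent_sets :: "'a set \<Rightarrow> 'e set \<Rightarrow> ('e \<Rightarrow> 'a set) \<Rightarrow> 'a set set" where
  "strongly_independent_sets I Ed edge =
     {S. S \<subseteq> I \<and> (\<forall>k\<in>Ed. \<forall>x\<in>S. \<forall>y\<in>S. x \<in> edge k \<longrightarrow> y \<in> edge k \<longrightarrow> x = y)}"

lemma hypergraph_induced:
  "hypergraph I Ed edge \<Longrightarrow> U \<subseteq> I \<Longrightarrow> hypergraph U (induced_edges Ed edge U) edge"
  by (auto simp: hypergraph_def induced_edges_def intro: finite_subset)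

lemma induced_edges_self: "hypergraph I Ed edge \<Longrightarrow> induced_edges Ed edge I = Ed"
  by (auto simp: hypergraph_def induced_edges_def)

lemma hypergraph_edgeD:
  assumes "hypergraph I Ed edge" "k \<in> Ed"
  shows "edge k \<subseteq> I" "finite (edge k)"
  using assms by (auto simp: hypergraph_def intro: finite_subset)

lemma empty_in_strongly_independent_sets: "{} \<in> strongly_independent_sets I Ed edge"
  by (simp add: strongly_independent_sets_def)

lemma finite_strongly_independent_sets: "finite I \<Longrightarrow> finite (strongly_independent_sets I Ed edge)"
  by (rule finite_subset[of _ "Pow I"]) (auto simp: strongly_independent_sets_def)

lemma finite_colorings: "finite I \<Longrightarrow> finite (colorings I m)"
  by (simp add: colorings_def finite_PiE)

lemma finite_proper_colorings: "finite I \<Longrightarrow> finite (proper_colorings I Ed edge m)"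
  by (simp add: proper_colorings_def finite_colorings)

lemma finite_compatible_pairs:
  assumes "hypergraph I Ed edge"
  shows "finite (compatible_pairs I Ed edge m)"
proof (rule finite_subset)
  show "compatible_pairs I Ed edge m \<subseteq> headings Ed edge \<times> colorings I m"
    by (auto simp: compatible_pairs_def acyclic_headings_def acyclic_heading_def)
  show "finite (headings Ed edge \<times> colorings I m)"
    using assms unfolding hypergraph_def headings_def
    by (intro finite_cartesian_product finite_PiE finite_colorings) (auto intro: finite_subset)
qed

lemma colorings_0: "colorings I 0 = (if I = {} then {\<lambda>_. undefined} else {})"
  by (auto simp: colorings_def PiE_eq_empty_iff)

lemma card_proper_colorings_0:
  "hypergraph I Ed edge \<Longrightarrow> card (proper_colorings I Ed edge 0) = (if I = {} then 1 else 0)"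
  by (auto simp: proper_colorings_def colorings_0 proper_def hypergraph_def)

lemma card_compatible_pairs_0:
  "hypergraph I Ed edge \<Longrightarrow> card (compatible_pairs I Ed edge 0) = (if I = {} then 1 else 0)"
proof (cases "I = {}")
  case True
  moreover assume "hypergraph I Ed edge"
  ultimately have "Ed = {}" by (auto simp: hypergraph_def)
  then have "compatible_pairs I Ed edge 0 = {(\<lambda>_. undefined, \<lambda>_. undefined)}"
    using True by (auto simp: compatible_pairs_def acyclic_headings_def acyclic_heading_def
        headings_def colorings_0 compatible_def oriented_cycle_def Suc_le_eq)
  then show ?thesis using True by simp
qed (simp add: compatible_pairs_def colorings_0)

section \<open>Splitting off the top color class\<close>

lemma Max_image_eq_upper_bound:
  assumes "finite A" "c ` A \<subseteq> {1..n}" "a \<in> A" "c a = n"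
  shows "Max (c ` A) = n"
  using assms by (intro Max_eqI) auto

lemma proper_iff_top_class:
  assumes H: "hypergraph I Ed edge" and c: "c \<in> colorings I (Suc m)"
    and S: "S = {i \<in> I. c i = Suc m}"
  shows "proper Ed edge c \<longleftrightarrow> S \<in> strongly_independent_sets I Ed edge \<and>
           proper (induced_edges Ed edge (I - S)) edge (restrict c (I - S))"
proof -
  note edge = hypergraph_edgeD[OF H]
  have top: "(\<exists>!i. i \<in> edge k \<and> c i = Max (c ` edge k)) \<longleftrightarrow>
      (\<forall>x\<in>S. \<forall>y\<in>S. x \<in> edge k \<longrightarrow> y \<in> edge k \<longrightarrow> x = y)"
    if "k \<in> Ed" "z \<in> edge k \<inter> S" for k z
  proof -
    have "Max (c ` edge k) = Suc m"
      using that edge c S by (intro Max_image_eq_upper_bound) (auto simp: colorings_def)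
    then have "i \<in> edge k \<and> c i = Max (c ` edge k) \<longleftrightarrow> i \<in> edge k \<inter> S" for i
      using that edge S by auto
    then show ?thesis using that by (simp only:) blast
  qed
  have low: "(\<exists>!i. i \<in> edge k \<and> c i = Max (c ` edge k)) \<longleftrightarrow>
      (\<exists>!i. i \<in> edge k \<and> restrict c (I - S) i = Max (restrict c (I - S) ` edge k))"
    if "k \<in> induced_edges Ed edge (I - S)" for k
  proof -
    have "edge k \<subseteq> I - S" using that by (simp add: induced_edges_def)
    then have "restrict c (I - S) ` edge k = c ` edge k" "\<forall>i\<in>edge k. restrict c (I - S) i = c i"
      by auto
    then show ?thesis by (metis (no_types, lifting))
  qed
  have induced: "k \<in> induced_edges Ed edge (I - S) \<longleftrightarrow> k \<in> Ed \<and> edge k \<inter> S = {}" for k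
    using edge by (auto simp: induced_edges_def)
  show ?thesis
  proof
    assume proper: "proper Ed edge c"
    have "S \<in> strongly_independent_sets I Ed edge"
      unfolding strongly_independent_sets_def
    proof (intro CollectI conjI ballI impI)
      show "S \<subseteq> I" using S by blast
      fix k x y assume "k \<in> Ed" "x \<in> S" "y \<in> S" "x \<in> edge k" "y \<in> edge k"
      with top[of k x] proper show "x = y" by (auto simp: proper_def)
    qed
    moreover have "proper (induced_edges Ed edge (I - S)) edge (restrict c (I - S))"
      using proper low induced by (auto simp: proper_def)
    ultimately show "S \<in> strongly_independent_sets I Ed edge \<and>
        proper (induced_edges Ed edge (I - S)) edge (restrict c (I - S))" ..
  next
    assume indep: "S \<in> strongly_independent_sets I Ed edge \<and>
        proper (induced_edges Ed edge (I - S)) edge (restrict c (I - S))"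
    show "proper Ed edge c"
      unfolding proper_def
    proof
      fix k assume k: "k \<in> Ed"
      show "\<exists>!i. i \<in> edge k \<and> c i = Max (c ` edge k)"
      proof (cases "edge k \<inter> S = {}")
        case True
        with k indep low induced show ?thesis by (auto simp: proper_def)
      next
        case False
        then obtain z where "z \<in> edge k \<inter> S" by blast
        with k indep top[of k z] show ?thesis by (simp add: strongly_independent_sets_def)
      qed
    qed
  qed
qed

definition paint :: "'a set \<Rightarrow> nat \<Rightarrow> ('a \<Rightarrow> nat) \<Rightarrow> 'a \<Rightarrow> nat" where
  "paint S n c i = (if i \<in> S then n else c i)"

lemma paint_in_set [simp]: "i \<in> S \<Longrightarrow> paint S n c i = n"
  by (simp add: paint_def)

lemma paint_in_colorings:
  assumes "c \<in> colorings (I - S) m" "S \<subseteq> I" "m \<le> n" "0 < n"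
  shows "paint S n c \<in> colorings I n"
proof -
  have "c i \<in> {1..n}" if "i \<in> I - S" for i
    using PiE_mem[OF assms(1)[unfolded colorings_def] that] assms(3) by auto
  then show ?thesis
    using assms by (auto simp: colorings_def paint_def PiE_iff extensional_def)
qed

lemma restrict_paint: "c \<in> colorings (I - S) m \<Longrightarrow> restrict (paint S n c) (I - S) = c"
  by (auto simp: colorings_def paint_def PiE_iff extensional_def)

lemma paint_restrict:
  "c \<in> colorings I n \<Longrightarrow> (\<And>i. i \<in> S \<Longrightarrow> c i = n) \<Longrightarrow> paint S n (restrict c (I - S)) = c"
  by (auto simp: colorings_def paint_def PiE_iff extensional_def)

lemma top_class_paint:
  assumes "c \<in> colorings (I - S) m" "S \<subseteq> I"
  shows "{i \<in> I. paint S (Suc m) c i = Suc m} = S"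
proof -
  have "c i \<noteq> Suc m" if "i \<in> I - S" for i
    using PiE_mem[OF assms(1)[unfolded colorings_def] that] by auto
  then show ?thesis using assms(2) by (auto simp: paint_def)
qed

lemma bij_betw_top_class:
  assumes H: "hypergraph I Ed edge"
  shows "bij_betw (\<lambda>c. ({i \<in> I. c i = Suc m}, restrict c (I - {i \<in> I. c i = Suc m})))
    (proper_colorings I Ed edge (Suc m))
    (SIGMA S:strongly_independent_sets I Ed edge.
       proper_colorings (I - S) (induced_edges Ed edge (I - S)) edge m)"
    (is "bij_betw ?split ?A ?B")
proof -
  let ?paint = "\<lambda>(S, c). paint S (Suc m) c"
  have split: "?split c \<in> ?B \<and> ?paint (?split c) = c" if "c \<in> ?A" for c
  proof -
    have c: "c \<in> colorings I (Suc m)" and "proper Ed edge c"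
      using that by (auto simp: proper_colorings_def)
    moreover have "restrict c (I - {i \<in> I. c i = Suc m}) \<in> colorings (I - {i \<in> I. c i = Suc m}) m"
      using c by (auto simp: colorings_def PiE_iff le_Suc_eq)
    ultimately show ?thesis
      using proper_iff_top_class[OF H c refl] paint_restrict[OF c, of "{i \<in> I. c i = Suc m}"]
      by (simp add: proper_colorings_def)
  qed
  have paint: "?paint p \<in> ?A \<and> ?split (?paint p) = p" if "p \<in> ?B" for p
  proof -
    obtain S c where p: "p = (S, c)" and S: "S \<in> strongly_independent_sets I Ed edge"
      and c: "c \<in> colorings (I - S) m" and "proper (induced_edges Ed edge (I - S)) edge c"
      using \<open>p \<in> ?B\<close> by (auto simp: proper_colorings_def)
    moreover have SI: "S \<subseteq> I" using S by (simp add: strongly_independent_sets_def)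
    moreover have col: "paint S (Suc m) c \<in> colorings I (Suc m)"
      using paint_in_colorings[OF c SI] by simp
    ultimately show ?thesis
      using proper_iff_top_class[OF H col] top_class_paint[OF c SI] restrict_paint[OF c]
      by (simp add: proper_colorings_def)
  qed
  show ?thesis
    using split paint by (intro bij_betw_byWitness[where f' = ?paint]) blast+
qed

lemma card_proper_colorings_Suc:
  assumes H: "hypergraph I Ed edge"
  shows "card (proper_colorings I Ed edge (Suc m)) =
    (\<Sum>S\<in>strongly_independent_sets I Ed edge.
       card (proper_colorings (I - S) (induced_edges Ed edge (I - S)) edge m))"
  using bij_betw_same_card[OF bij_betw_top_class[OF H]] H
  by (simp add: card_SigmaI hypergraph_def finite_strongly_independent_sets finite_proper_colorings)

section \<open>Oriented cycles and sinks\<close>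

definition sinks :: "'e set \<Rightarrow> ('e \<Rightarrow> 'a set) \<Rightarrow> ('e \<Rightarrow> 'a) \<Rightarrow> 'a set" where
  "sinks Ed edge s = {v. \<forall>k\<in>Ed. v \<in> edge k \<longrightarrow> s k = v}"

lemma oriented_cycle_head_not_sink:
  assumes "oriented_cycle Ed edge s l f" "j < l"
  shows "s (f j) \<notin> sinks Ed edge s"
proof -
  let ?j = "Suc j mod l"
  have "?j < l" using assms by (simp add: oriented_cycle_def)
  then have "f ?j \<in> Ed" "s (f j) \<in> edge (f ?j)" "s (f ?j) \<noteq> s (f j)"
    using assms by (auto simp: oriented_cycle_def)
  then show ?thesis by (auto simp: sinks_def)
qed

lemma oriented_cycle_transfer:
  assumes "oriented_cycle Ed edge s l f" "\<And>j. j < l \<Longrightarrow> f j \<in> Ed' \<and> s' (f j) = s (f j)"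
  shows "oriented_cycle Ed' edge s' l f"
proof -
  have "Suc j mod l < l" if "j < l" for j using that by simp
  then show ?thesis using assms by (auto simp: oriented_cycle_def)
qed

lemma oriented_cycle_exists:
  assumes "finite W" "W \<noteq> {}"
    and step: "\<And>w. w \<in> W \<Longrightarrow> \<exists>k\<in>Ed. w \<in> edge k \<and> s k \<noteq> w \<and> s k \<in> W"
  shows "\<exists>l f. oriented_cycle Ed edge s l f"
proof -
  obtain out where out: "\<And>w. w \<in> W \<Longrightarrow> out w \<in> Ed \<and> w \<in> edge (out w) \<and> s (out w) \<noteq> w \<and> s (out w) \<in> W"
    using step by metis
  obtain w0 where "w0 \<in> W" using assms(2) by blast
  define walk where "walk n = ((s \<circ> out) ^^ n) w0" for n
  have walk_W: "walk n \<in> W" for n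
    by (induction n) (use \<open>w0 \<in> W\<close> out in \<open>auto simp: walk_def\<close>)
  have "\<not> inj_on walk {..card W}"
  proof
    assume "inj_on walk {..card W}"
    then have "card {..card W} \<le> card W"
      by (rule card_inj_on_le) (use walk_W assms(1) in auto)
    then show False by simp
  qed
  then obtain i j where "i < j" "walk i = walk j"
    unfolding inj_on_def by (metis linorder_neqE_nat)
  define l where "l = j - i"
  define f where "f t = out (walk (i + t))" for t
  have "oriented_cycle Ed edge s l f"
    unfolding oriented_cycle_def
  proof (intro conjI allI impI)
    show "1 \<le> l" using \<open>i < j\<close> by (simp add: l_def)
    fix t assume "t < l"
    show "f t \<in> Ed" using out walk_W by (simp add: f_def)
    have next_vertex: "walk (i + Suc t mod l) = s (f t)"
    proof (cases "Suc t < l")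
      case False
      then have "Suc t = l" "j = Suc (i + t)" using \<open>t < l\<close> \<open>i < j\<close> unfolding l_def by arith+
      then show ?thesis using \<open>Suc t = l\<close> \<open>walk i = walk j\<close> by (simp add: f_def walk_def)
    qed (simp add: f_def walk_def)
    have "walk (i + Suc t mod l) \<in> edge (f (Suc t mod l)) - {s (f (Suc t mod l))}"
      using out[OF walk_W, of "i + Suc t mod l"] by (auto simp: f_def)
    then show "s (f t) \<in> edge (f (Suc t mod l)) - {s (f (Suc t mod l))}"
      by (simp only: next_vertex)
  qed
  then show ?thesis by blast
qed

lemma acyclic_heading_sink_exists:
  assumes "acyclic_heading Ed edge s" "finite W" "W \<noteq> {}"
    and "\<And>k w. k \<in> Ed \<Longrightarrow> w \<in> W \<Longrightarrow> w \<in> edge k \<Longrightarrow> s k \<in> W"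
  shows "\<exists>v\<in>W. v \<in> sinks Ed edge s"
proof (rule ccontr)
  assume "\<not> (\<exists>v\<in>W. v \<in> sinks Ed edge s)"
  then have "\<exists>k\<in>Ed. w \<in> edge k \<and> s k \<noteq> w \<and> s k \<in> W" if "w \<in> W" for w
    using that assms(4) by (force simp: sinks_def)
  then show False
    using oriented_cycle_exists[OF assms(2,3), of Ed edge s] assms(1) by (auto simp: acyclic_heading_def)
qed

lemma acyclic_heading_restrict:
  assumes "acyclic_heading Ed edge s" "Ed' \<subseteq> Ed"
  shows "acyclic_heading Ed' edge (restrict s Ed')"
proof -
  have "\<not> oriented_cycle Ed' edge (restrict s Ed') l f" for l f
  proof
    assume cycle: "oriented_cycle Ed' edge (restrict s Ed') l f"
    then have "f j \<in> Ed \<and> s (f j) = restrict s Ed' (f j)" if "j < l" for j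
      using that assms(2) by (auto simp: oriented_cycle_def)
    then have "oriented_cycle Ed edge s l f" by (rule oriented_cycle_transfer[OF cycle])
    with assms(1) show False by (simp add: acyclic_heading_def)
  qed
  then show ?thesis
    using assms by (auto simp: acyclic_heading_def headings_def)
qed

section \<open>The alternating recurrence for compatible pairs\<close>

definition top_sinks ::
  "'a set \<Rightarrow> 'e set \<Rightarrow> ('e \<Rightarrow> 'a set) \<Rightarrow> nat \<Rightarrow> ('e \<Rightarrow> 'a) \<Rightarrow> ('a \<Rightarrow> nat) \<Rightarrow> 'a set" where
  "top_sinks I Ed edge n s c = {v \<in> I. c v = n} \<inter> sinks Ed edge s"

definition heading_towards :: "'e set \<Rightarrow> ('e \<Rightarrow> 'a set) \<Rightarrow> 'a set \<Rightarrow> ('e \<Rightarrow> 'a) \<Rightarrow> 'e \<Rightarrow> 'a" where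
  "heading_towards Ed edge S s = (\<lambda>k. if k \<in> Ed \<and> edge k \<inter> S \<noteq> {} then THE v. v \<in> edge k \<inter> S else s k)"

lemma heading_towards_meeting:
  assumes "S \<in> strongly_independent_sets I Ed edge" "k \<in> Ed" "v \<in> edge k \<inter> S"
  shows "heading_towards Ed edge S s k = v"
  using assms by (auto simp: heading_towards_def strongly_independent_sets_def)

lemma heading_towards_avoiding:
  "edge k \<inter> S = {} \<Longrightarrow> heading_towards Ed edge S s k = s k"
  by (simp add: heading_towards_def)

lemma sinks_heading_towards:
  "S \<in> strongly_independent_sets I Ed edge \<Longrightarrow> S \<subseteq> sinks Ed edge (heading_towards Ed edge S s)"
  using heading_towards_meeting by (fastforce simp: sinks_def)

lemma acyclic_heading_towards:
  assumes H: "hypergraph I Ed edge" and S: "S \<in> strongly_independent_sets I Ed edge"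
    and "acyclic_heading (induced_edges Ed edge (I - S)) edge s"
  shows "acyclic_heading Ed edge (heading_towards Ed edge S s)"
proof -
  let ?E = "induced_edges Ed edge (I - S)"
  let ?s' = "heading_towards Ed edge S s"
  have induced: "k \<in> ?E \<longleftrightarrow> k \<in> Ed \<and> edge k \<inter> S = {}" for k
    using hypergraph_edgeD[OF H] by (auto simp: induced_edges_def)
  have s: "s \<in> Pi\<^sub>E ?E edge" and acyclic: "\<not> oriented_cycle ?E edge s l f" for l f
    using assms(3) by (auto simp: acyclic_heading_def headings_def)
  have "?s' \<in> headings Ed edge"
    unfolding headings_def PiE_iff
  proof (intro conjI ballI)
    show "?s' k \<in> edge k" if k: "k \<in> Ed" for k
    proof (cases "edge k \<inter> S = {}")
      case True
      then show ?thesis using k PiE_mem[OF s] induced by (simp add: heading_towards_def)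
    next
      case False
      then show ?thesis using heading_towards_meeting[OF S k] by auto
    qed
    show "?s' \<in> extensional Ed"
      using s by (auto simp: heading_towards_def PiE_iff extensional_def induced_edges_def)
  qed
  moreover have "\<not> oriented_cycle Ed edge ?s' l f" for l f
  proof
    assume cycle: "oriented_cycle Ed edge ?s' l f"
    \<comment> \<open>heads on a cycle are never sinks, so the cycle avoids S and is already a cycle of s\<close>
    have "f j \<in> ?E \<and> s (f j) = ?s' (f j)" if "j < l" for j
    proof -
      have "f j \<in> Ed" using cycle that by (simp add: oriented_cycle_def)
      moreover have "edge (f j) \<inter> S = {}"
        using heading_towards_meeting[OF S \<open>f j \<in> Ed\<close>] oriented_cycle_head_not_sink[OF cycle that]
          sinks_heading_towards[OF S] by force
      ultimately show ?thesis by (simp add: induced heading_towards_avoiding)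
    qed
    with acyclic show False using oriented_cycle_transfer[OF cycle] by blast
  qed
  ultimately show ?thesis by (simp add: acyclic_heading_def)
qed

lemma compatible_pair_extend:
  assumes H: "hypergraph I Ed edge" and S: "S \<in> strongly_independent_sets I Ed edge"
    and sc: "(s, c) \<in> compatible_pairs (I - S) (induced_edges Ed edge (I - S)) edge (Suc m)"
  defines "s' \<equiv> heading_towards Ed edge S s" and "c' \<equiv> paint S (Suc m) c"
  shows "(s', c') \<in> compatible_pairs I Ed edge (Suc m) \<and> S \<subseteq> top_sinks I Ed edge (Suc m) s' c'"
proof -
  let ?E = "induced_edges Ed edge (I - S)"
  note edge = hypergraph_edgeD[OF H]
  have SI: "S \<subseteq> I" using S by (simp add: strongly_independent_sets_def)
  have s: "acyclic_heading ?E edge s" "s \<in> Pi\<^sub>E ?E edge"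
    using sc by (auto simp: compatible_pairs_def acyclic_headings_def acyclic_heading_def headings_def)
  have c: "c \<in> colorings (I - S) (Suc m)" and compat: "compatible ?E edge c s"
    using sc by (auto simp: compatible_pairs_def)
  have c': "c' \<in> colorings I (Suc m)"
    unfolding c'_def using paint_in_colorings[OF c SI] by simp
  have "compatible Ed edge c' s'"
    unfolding compatible_def
  proof
    fix k assume k: "k \<in> Ed"
    show "c' (s' k) = Max (c' ` edge k)"
    proof (cases "edge k \<inter> S = {}")
      case True
      then have "k \<in> ?E" "edge k \<subseteq> I - S" using k edge(1)[OF k] by (auto simp: induced_edges_def)
      moreover have "s k \<in> edge k" using PiE_mem[OF s(2) \<open>k \<in> ?E\<close>] .
      ultimately show ?thesis
        using compat True by (auto simp: compatible_def c'_def paint_def s'_def heading_towards_avoiding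
            intro!: arg_cong[where f = Max])
    next
      case False
      then obtain v where v: "v \<in> edge k \<inter> S" by blast
      have "c' ` edge k \<subseteq> {1..Suc m}" using c' edge(1)[OF k] by (auto simp: colorings_def PiE_iff)
      then have "Max (c' ` edge k) = Suc m"
        using v edge(2)[OF k] by (intro Max_image_eq_upper_bound) (auto simp: c'_def)
      then show ?thesis using v heading_towards_meeting[OF S k v] by (simp add: s'_def c'_def)
    qed
  qed
  then show ?thesis
    using c' SI acyclic_heading_towards[OF H S s(1)] sinks_heading_towards[OF S]
    by (auto simp: compatible_pairs_def acyclic_headings_def top_sinks_def s'_def c'_def)
qed

lemma compatible_pair_restrict:
  assumes sc: "(s, c) \<in> compatible_pairs I Ed edge n" and S: "S \<subseteq> top_sinks I Ed edge n s c"
  shows "S \<in> strongly_independent_sets I Ed edge \<and>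
    (restrict s (induced_edges Ed edge (I - S)), restrict c (I - S))
      \<in> compatible_pairs (I - S) (induced_edges Ed edge (I - S)) edge n"
proof -
  let ?E = "induced_edges Ed edge (I - S)"
  have s: "acyclic_heading Ed edge s" "s \<in> Pi\<^sub>E Ed edge"
    using sc by (auto simp: compatible_pairs_def acyclic_headings_def acyclic_heading_def headings_def)
  have c: "c \<in> colorings I n" and compat: "compatible Ed edge c s"
    using sc by (auto simp: compatible_pairs_def)
  have "S \<in> strongly_independent_sets I Ed edge"
    unfolding strongly_independent_sets_def
  proof (intro CollectI conjI ballI impI)
    show "S \<subseteq> I" using S by (auto simp: top_sinks_def)
    fix k x y assume "k \<in> Ed" "x \<in> S" "y \<in> S" "x \<in> edge k" "y \<in> edge k"
    with S have "s k = x" "s k = y" by (auto simp: top_sinks_def sinks_def)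
    then show "x = y" by simp
  qed
  moreover have "acyclic_heading ?E edge (restrict s ?E)"
    using s(1) by (rule acyclic_heading_restrict) (auto simp: induced_edges_def)
  moreover have "restrict c (I - S) \<in> colorings (I - S) n"
    using c by (auto simp: colorings_def)
  moreover have "compatible ?E edge (restrict c (I - S)) (restrict s ?E)"
  proof (unfold compatible_def, intro ballI)
    fix k assume k: "k \<in> ?E"
    then have "k \<in> Ed" "edge k \<subseteq> I - S" by (auto simp: induced_edges_def)
    moreover have "s k \<in> edge k" using PiE_mem[OF s(2) \<open>k \<in> Ed\<close>] .
    ultimately show "restrict c (I - S) (restrict s ?E k) = Max (restrict c (I - S) ` edge k)"
      using compat k by (auto simp: compatible_def intro!: arg_cong[where f = Max])
  qed
  ultimately show ?thesis
    by (simp add: compatible_pairs_def acyclic_headings_def)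
qed

lemma restrict_heading_towards:
  "s \<in> Pi\<^sub>E (induced_edges Ed edge (I - S)) edge \<Longrightarrow>
     restrict (heading_towards Ed edge S s) (induced_edges Ed edge (I - S)) = s"
  by (fastforce simp: heading_towards_def induced_edges_def PiE_iff extensional_def)

lemma heading_towards_restrict:
  assumes H: "hypergraph I Ed edge" and s: "s \<in> headings Ed edge" and S: "S \<subseteq> sinks Ed edge s"
  shows "heading_towards Ed edge S (restrict s (induced_edges Ed edge (I - S))) = s"
proof
  fix k
  show "heading_towards Ed edge S (restrict s (induced_edges Ed edge (I - S))) k = s k"
  proof (cases "k \<in> Ed \<and> edge k \<inter> S \<noteq> {}")
    case True
    then obtain v where "v \<in> edge k \<inter> S" by blast
    moreover have "w = s k" if "w \<in> edge k \<inter> S" for w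
      using that True S by (auto simp: sinks_def)
    ultimately show ?thesis using True by (auto simp: heading_towards_def intro!: the_equality)
  next
    case False
    then show ?thesis
      using H s by (auto simp: heading_towards_def induced_edges_def hypergraph_def headings_def
          PiE_iff extensional_def)
  qed
qed

lemma sum_Pow_minus_one_power:
  "finite A \<Longrightarrow> (\<Sum>X\<in>Pow A. (-1 :: 'a::comm_ring_1) ^ card X) = (if A = {} then 1 else 0)"
  using prod_diff_conv_sum[of A "\<lambda>_. 1 :: 'a" "\<lambda>_. 1"] by (simp add: power_0_left card_eq_0_iff)

lemma compatible_pairs_without_top_sinks:
  assumes H: "hypergraph I Ed edge"
  shows "{(s, c) \<in> compatible_pairs I Ed edge (Suc m). top_sinks I Ed edge (Suc m) s c = {}} =
    compatible_pairs I Ed edge m"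
proof (intro set_eqI iffI; clarify)
  fix s c
  assume sc: "(s, c) \<in> compatible_pairs I Ed edge (Suc m)" and no_sink: "top_sinks I Ed edge (Suc m) s c = {}"
  have acyclic: "acyclic_heading Ed edge s" and s: "s \<in> Pi\<^sub>E Ed edge"
    and c: "c \<in> colorings I (Suc m)" and compat: "compatible Ed edge c s"
    using sc by (auto simp: compatible_pairs_def acyclic_headings_def acyclic_heading_def headings_def)
  let ?W = "{v \<in> I. c v = Suc m}"
  \<comment> \<open>the top color class is closed under following heads, so it would contain a sink\<close>
  have "s k \<in> ?W" if "k \<in> Ed" "w \<in> ?W" "w \<in> edge k" for k w
  proof -
    note edge = hypergraph_edgeD[OF H that(1)]
    then have "Max (c ` edge k) = Suc m"
      using that c by (intro Max_image_eq_upper_bound) (auto simp: colorings_def PiE_iff)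
    moreover have "s k \<in> edge k" using PiE_mem[OF s that(1)] .
    ultimately show ?thesis using compat that(1) edge by (auto simp: compatible_def)
  qed
  moreover have "finite ?W" using H by (simp add: hypergraph_def)
  ultimately have "?W = {}"
    using acyclic_heading_sink_exists[OF acyclic, of ?W] no_sink by (auto simp: top_sinks_def)
  then have "c \<in> colorings I m"
    using c by (fastforce simp: colorings_def PiE_iff le_Suc_eq)
  then show "(s, c) \<in> compatible_pairs I Ed edge m"
    using sc by (simp add: compatible_pairs_def)
next
  fix s c assume "(s, c) \<in> compatible_pairs I Ed edge m"
  moreover have "colorings I m \<subseteq> colorings I (Suc m)"
    unfolding colorings_def by (rule PiE_mono) auto
  ultimately show "(s, c) \<in> compatible_pairs I Ed edge (Suc m) \<and> top_sinks I Ed edge (Suc m) s c = {}"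
    by (fastforce simp: compatible_pairs_def top_sinks_def colorings_def PiE_iff)
qed

lemma bij_betw_heading_towards:
  assumes H: "hypergraph I Ed edge"
  shows "bij_betw (\<lambda>(S, s, c). ((heading_towards Ed edge S s, paint S (Suc m) c), S))
    (SIGMA S:strongly_independent_sets I Ed edge.
       compatible_pairs (I - S) (induced_edges Ed edge (I - S)) edge (Suc m))
    (Sigma (compatible_pairs I Ed edge (Suc m)) (\<lambda>(s, c). Pow (top_sinks I Ed edge (Suc m) s c)))"
    (is "bij_betw ?extend ?A ?B")
proof -
  let ?restrict = "\<lambda>((s, c), S). (S, restrict s (induced_edges Ed edge (I - S)), restrict c (I - S))"
  have extend: "?extend a \<in> ?B \<and> ?restrict (?extend a) = a" if "a \<in> ?A" for a
  proof -
    obtain S s c where a: "a = (S, s, c)" and S: "S \<in> strongly_independent_sets I Ed edge"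
      and sc: "(s, c) \<in> compatible_pairs (I - S) (induced_edges Ed edge (I - S)) edge (Suc m)"
      using \<open>a \<in> ?A\<close> by auto
    then have "s \<in> Pi\<^sub>E (induced_edges Ed edge (I - S)) edge" "c \<in> colorings (I - S) (Suc m)"
      by (auto simp: compatible_pairs_def acyclic_headings_def acyclic_heading_def headings_def)
    then show ?thesis
      using compatible_pair_extend[OF H S sc] by (simp add: a restrict_heading_towards restrict_paint)
  qed
  have restrict: "?restrict b \<in> ?A \<and> ?extend (?restrict b) = b" if "b \<in> ?B" for b
  proof -
    obtain s c S where b: "b = ((s, c), S)" and sc: "(s, c) \<in> compatible_pairs I Ed edge (Suc m)"
      and S: "S \<subseteq> top_sinks I Ed edge (Suc m) s c"
      using \<open>b \<in> ?B\<close> by auto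
    have "s \<in> headings Ed edge" "c \<in> colorings I (Suc m)"
      using sc by (auto simp: compatible_pairs_def acyclic_headings_def acyclic_heading_def)
    moreover have "S \<subseteq> sinks Ed edge s" "\<And>i. i \<in> S \<Longrightarrow> c i = Suc m"
      using S by (auto simp: top_sinks_def)
    ultimately have "heading_towards Ed edge S (restrict s (induced_edges Ed edge (I - S))) = s"
      "paint S (Suc m) (restrict c (I - S)) = c"
      using heading_towards_restrict[OF H] paint_restrict by blast+
    then show ?thesis using compatible_pair_restrict[OF sc S] by (simp add: b)
  qed
  show ?thesis
    using extend restrict by (intro bij_betw_byWitness[where f' = ?restrict]) blast+
qed

lemma card_compatible_pairs_recurrence:
  assumes H: "hypergraph I Ed edge"
  shows "real (card (compatible_pairs I Ed edge m)) =
    (\<Sum>S\<in>strongly_independent_sets I Ed edge. (-1) ^ card S *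
       real (card (compatible_pairs (I - S) (induced_edges Ed edge (I - S)) edge (Suc m))))"
proof -
  let ?SI = "strongly_independent_sets I Ed edge"
  let ?CP = "\<lambda>S. compatible_pairs (I - S) (induced_edges Ed edge (I - S)) edge (Suc m)"
  let ?T = "\<lambda>(s, c). top_sinks I Ed edge (Suc m) s c"
  have fin_I: "finite I" using H by (simp add: hypergraph_def)
  have fin_CP: "finite (?CP S)" if "S \<in> ?SI" for S
    using that H by (intro finite_compatible_pairs hypergraph_induced)
      (auto simp: strongly_independent_sets_def)
  have fin_T: "finite (?T p)" for p
    using fin_I by (auto simp: top_sinks_def split: prod.split)
  have "(\<Sum>S\<in>?SI. (-1) ^ card S * real (card (?CP S))) = (\<Sum>(S, p)\<in>Sigma ?SI ?CP. (-1) ^ card S)"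
    using finite_strongly_independent_sets[OF fin_I, of Ed edge] fin_CP
    by (simp add: sum.Sigma[symmetric] mult.commute)
  also have "\<dots> = (\<Sum>(p, S)\<in>Sigma (compatible_pairs I Ed edge (Suc m)) (\<lambda>p. Pow (?T p)). (-1) ^ card S)"
    using sum.reindex_bij_betw[OF bij_betw_heading_towards[OF H], of "\<lambda>(p, S). (-1) ^ card S"]
    by (simp add: split_def)
  also have "\<dots> = (\<Sum>p\<in>compatible_pairs I Ed edge (Suc m). \<Sum>S\<in>Pow (?T p). (-1) ^ card S)"
    using finite_compatible_pairs[OF H] fin_T by (simp add: sum.Sigma split_def)
  \<comment> \<open>only pairs without a sink of the top color survive the alternating sum\<close>
  also have "\<dots> = real (card {p \<in> compatible_pairs I Ed edge (Suc m). ?T p = {}})"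
    using finite_compatible_pairs[OF H] fin_T by (simp add: sum_Pow_minus_one_power sum.If_cases Int_def)
  also have "{p \<in> compatible_pairs I Ed edge (Suc m). ?T p = {}} = compatible_pairs I Ed edge m"
    using compatible_pairs_without_top_sinks[OF H] by (simp add: split_def)
  finally show ?thesis ..
qed

section \<open>Reciprocity\<close>

lemma minus_one_power_card_Diff:
  assumes "finite I" "S \<subseteq> I"
  shows "(-1 :: 'a::ring_1) ^ card I = (-1) ^ card S * (-1) ^ card (I - S)"
proof -
  have "card I = card S + card (I - S)"
    using assms by (simp add: card_Diff_subset card_mono finite_subset)
  then show ?thesis by (simp add: power_add)
qed

lemma chromatic_reciprocity:
  assumes "hypergraph I Ed edge"
  shows "\<exists>P :: real poly.
    (\<forall>m. poly P (real m) = real (card (proper_colorings I Ed edge m))) \<and>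
    (\<forall>m. (-1) ^ card I * poly P (- real m) = real (card (compatible_pairs I Ed edge m)))"
  using assms
proof (induction "card I" arbitrary: I Ed rule: less_induct)
  case less
  note H = less.prems
  let ?SI = "strongly_independent_sets I Ed edge - {{}}"
  let ?E = "\<lambda>S. induced_edges Ed edge (I - S)"
  let ?f = "\<lambda>I Ed m. real (card (proper_colorings I Ed edge m))"
  let ?g = "\<lambda>I Ed m. real (card (compatible_pairs I Ed edge m))"
  have fin_I: "finite I" using H by (simp add: hypergraph_def)
  have SI: "S \<subseteq> I" "S \<noteq> {}" if "S \<in> ?SI" for S
    using that by (auto simp: strongly_independent_sets_def)
  have "\<exists>Q. (\<forall>m. poly Q (real m) = ?f (I - S) (?E S) m) \<and>
      (\<forall>m. (-1) ^ card (I - S) * poly Q (- real m) = ?g (I - S) (?E S) m)" if "S \<in> ?SI" for S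
  proof (rule less.hyps)
    show "card (I - S) < card I"
      using SI[OF that] fin_I by (intro psubset_card_mono) auto
    show "hypergraph (I - S) (?E S) edge" using H by (simp add: hypergraph_induced)
  qed
  then obtain Q where Q_nat: "\<And>S m. S \<in> ?SI \<Longrightarrow> poly (Q S) (real m) = ?f (I - S) (?E S) m"
    and Q_neg: "\<And>S m. S \<in> ?SI \<Longrightarrow> (-1) ^ card (I - S) * poly (Q S) (- real m) = ?g (I - S) (?E S) m"
    by metis
  define D where "D = (\<Sum>S\<in>?SI. Q S)"
  have remove_empty: "(\<Sum>S\<in>strongly_independent_sets I Ed edge. F S) = F {} + (\<Sum>S\<in>?SI. F S)"
    for F :: "'a set \<Rightarrow> real"
    using fin_I by (intro sum.remove finite_strongly_independent_sets empty_in_strongly_independent_sets)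
  have "?f I Ed (Suc m) - ?f I Ed m = poly D (of_nat m)" for m
    using card_proper_colorings_Suc[OF H, of m] remove_empty[of "\<lambda>S. ?f (I - S) (?E S) m"]
    by (simp add: D_def poly_sum Q_nat induced_edges_self[OF H])
  then obtain P where P_diff: "\<And>x. poly P (x + 1) - poly P x = poly D x"
    and P_nat: "\<And>m. poly P (real m) = ?f I Ed m"
    using poly_interpolating_differences[of "?f I Ed" D] by auto
  have sign: "(-1) ^ card S * ((-1) ^ card (I - S) * x) = (-1) ^ card I * (x :: real)"
    if "S \<in> ?SI" for S x
    using minus_one_power_card_Diff[OF fin_I SI(1)[OF that]] by (metis mult.assoc)
  have "?g I Ed m = ?g I Ed (Suc m) + (-1) ^ card I * poly D (- of_nat (Suc m))" for m
    using card_compatible_pairs_recurrence[OF H, of m] remove_empty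
    by (simp add: D_def poly_sum sum_distrib_left induced_edges_self[OF H] flip: Q_neg sign)
  moreover have "(-1) ^ card I * poly P 0 = ?g I Ed 0"
    using P_nat[of 0] H by (simp add: card_proper_colorings_0 card_compatible_pairs_0)
  ultimately have "(-1) ^ card I * poly P (- real m) = ?g I Ed m" for m
    using P_diff by (intro poly_neg_of_nat_by_recurrence[where D = D])
  with P_nat show ?case by blast
qed

lemma card_compatible_pairs_1:
  assumes H: "hypergraph I Ed edge"
  shows "card (compatible_pairs I Ed edge 1) = card (acyclic_headings Ed edge)"
proof -
  define one where "one = restrict (\<lambda>_. 1 :: nat) I"
  have "colorings I 1 = {one}"
    by (auto simp: colorings_def one_def PiE_iff extensional_def)
  moreover have "compatible Ed edge one s" if "s \<in> headings Ed edge" for s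
  proof -
    have "one ` edge k = {1}" "one (s k) = 1" if "k \<in> Ed" for k
      using H \<open>s \<in> headings Ed edge\<close> that by (auto simp: hypergraph_def headings_def one_def)
    then show ?thesis by (simp add: compatible_def)
  qed
  ultimately have "compatible_pairs I Ed edge 1 = acyclic_headings Ed edge \<times> {one}"
    by (auto simp: compatible_pairs_def acyclic_headings_def acyclic_heading_def)
  then show ?thesis by (simp add: card_cartesian_product)
qed

theorem mainTheorem10:
  fixes I :: "'a set" and Ed :: "'e set" and edge :: "'e \<Rightarrow> 'a set"
  assumes "hypergraph I Ed edge"
  shows "(\<exists>P :: real poly. \<forall>m::nat. m > 0 \<longrightarrow>
             poly P (real m) = real (card (proper_colorings I Ed edge m)))
       \<and> (\<forall>P :: real poly.
             (\<forall>m::nat. m > 0 \<longrightarrow> poly P (real m) = real (card (proper_colorings I Ed edge m)))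
           \<longrightarrow> (\<forall>m::nat. m > 0 \<longrightarrow>
                  (-1) ^ card I * poly P (- real m) = real (card (compatible_pairs I Ed edge m)))
             \<and> real (card (acyclic_headings Ed edge)) = (-1) ^ card I * poly P (-1))"
proof -
  obtain P :: "real poly"
    where P_nat: "\<And>m. poly P (real m) = real (card (proper_colorings I Ed edge m))"
      and P_neg: "\<And>m. (-1) ^ card I * poly P (- real m) = real (card (compatible_pairs I Ed edge m))"
    using chromatic_reciprocity[OF assms] by blast
  have "Q = P" if "\<forall>m::nat. m > 0 \<longrightarrow> poly Q (real m) = real (card (proper_colorings I Ed edge m))"
    for Q :: "real poly"
    using that P_nat by (intro poly_eqI_of_nat_pos) simp
  then show ?thesis
    using P_nat P_neg P_neg[of 1] card_compatible_pairs_1[OF assms] by auto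
qed

end
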